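(* Let $n\ge1$, $\delta\ge0$ and $\hat r\in\mathbb R^n$ with $\hat r_1\ge\hat r_2\ge\cdots\ge\hat r_n$. For $k\in\{1,\dots,n\}$ let $u^{(k)}\in\Delta_n$ have its first $k$ entries equal to $1/k$ and the rest $0$, and $A_k:=\frac1k\sum_{i=1}^k\hat r_i$. Then the problem $\max_{\pi\in\Delta_n}\{\langle\pi,\hat r\rangle-\delta\|\pi\|_\infty\}$ has an optimizer of the form $u^{(m)}$ for some $m\in\arg\max_{1\le k\le n}\{A_k-\delta/k\}$.
   Context: $\Delta_n$ is the probability simplex in $\mathbb R^n$; $\|\pi\|_\infty=\max_i|\pi_i|$. *)

theory Defs
  imports "HOL-Analysis.Analysis"
begin

text \<open>Vectors in R^n are represented as functions nat => real; only the
entries with index i < n (0-based, i.e. coordinates 1..n) matter.\<close>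

definition prob_simplex :: "nat \<Rightarrow> (nat \<Rightarrow> real) set" where
  "prob_simplex n = {\<pi>. (\<forall>i<n. 0 \<le> \<pi> i) \<and> (\<Sum>i<n. \<pi> i) = 1}"

definition inner_n :: "nat \<Rightarrow> (nat \<Rightarrow> real) \<Rightarrow> (nat \<Rightarrow> real) \<Rightarrow> real" where
  "inner_n n x y = (\<Sum>i<n. x i * y i)"

definition sup_norm :: "nat \<Rightarrow> (nat \<Rightarrow> real) \<Rightarrow> real" where
  "sup_norm n x = Max ((\<lambda>i. \<bar>x i\<bar>) ` {..<n})"

definition uvec :: "nat \<Rightarrow> nat \<Rightarrow> real" where
  "uvec k i = (if i < k then 1 / real k else 0)"

definition avg :: "(nat \<Rightarrow> real) \<Rightarrow> nat \<Rightarrow> real" where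
  "avg r k = (1 / real k) * (\<Sum>i<k. r i)"

end

theory Submission
  imports Defs
begin

text \<open>Let \<open>V\<close> be the maximum of \<open>A\<^sub>k - \<delta>/k\<close>, attained at \<open>k = m\<close>; the uniform vector
  on the first \<open>m\<close> coordinates has value exactly \<open>V\<close>. Maximality says that every prefix
  sum of \<open>r\<^sub>i - V\<close> is at most \<open>\<delta>\<close>. As \<open>r\<close> is non-increasing, the positive parts of
  \<open>r\<^sub>i - V\<close> sit on a prefix, so their total is at most \<open>\<delta>\<close> as well. Hence for every \<open>\<pi>\<close>
  in the simplex, \<open>\<langle>\<pi>, r\<rangle> = V + \<Sum> \<pi>\<^sub>i (r\<^sub>i - V) \<le> V + \<parallel>\<pi>\<parallel>\<^sub>\<infinity> \<Sum> max 0 (r\<^sub>i - V) \<le> V + \<delta> \<parallel>\<pi>\<parallel>\<^sub>\<infinity>\<close>.\<close>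

lemma sum_pos_part_eq_prefix_sum:
  fixes g :: "nat \<Rightarrow> real"
  assumes "\<And>i j. i \<le> j \<Longrightarrow> j < n \<Longrightarrow> g j \<le> g i"
  shows "\<exists>k\<le>n. (\<Sum>i<n. max 0 (g i)) = (\<Sum>i<k. g i)"
  using assms
proof (induction n)
  case 0
  then show ?case by simp
next
  case (Suc n)
  show ?case
  proof (cases "g n > 0")
    case True
    have "max 0 (g i) = g i" if "i < Suc n" for i
      using Suc.prems[of i n] that True by simp
    then have "(\<Sum>i<Suc n. max 0 (g i)) = (\<Sum>i<Suc n. g i)"
      by (intro sum.cong) auto
    then show ?thesis by blast
  next
    case False
    obtain k where "k \<le> n" "(\<Sum>i<n. max 0 (g i)) = (\<Sum>i<k. g i)"
      using Suc by auto
    with False show ?thesis by (intro exI[of _ k]) auto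
  qed
qed

lemma abs_le_sup_norm: "i < n \<Longrightarrow> \<bar>x i\<bar> \<le> sup_norm n x"
  unfolding sup_norm_def by (intro Max_ge) auto

lemma inner_n_uvec:
  assumes "m \<le> n"
  shows "inner_n n (uvec m) x = avg x m"
proof -
  have "inner_n n (uvec m) x = (\<Sum>i<m. uvec m i * x i)"
    unfolding inner_n_def using assms
    by (intro sum.mono_neutral_right) (auto simp: uvec_def)
  also have "\<dots> = avg x m"
    by (simp add: avg_def uvec_def sum_distrib_left)
  finally show ?thesis .
qed

lemma uvec_in_prob_simplex:
  assumes "1 \<le> m" "m \<le> n"
  shows "uvec m \<in> prob_simplex n"
proof -
  have "(\<Sum>i<n. uvec m i) = inner_n n (uvec m) (\<lambda>_. 1)"
    by (simp add: inner_n_def)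
  also have "\<dots> = 1"
    using assms by (simp add: inner_n_uvec avg_def)
  finally show ?thesis
    by (simp add: prob_simplex_def uvec_def)
qed

lemma sup_norm_uvec:
  assumes "1 \<le> m" "m \<le> n"
  shows "sup_norm n (uvec m) = 1 / real m"
proof -
  have "(\<lambda>i. \<bar>uvec m i\<bar>) ` {..<n} = insert (1 / real m) (if m < n then {0} else {})"
    using assms by (auto simp: uvec_def image_iff intro!: exI[of _ 0])
  then show ?thesis
    unfolding sup_norm_def by auto
qed

lemma inner_n_le_level_plus_sup_norm_pos_part:
  assumes "\<pi> \<in> prob_simplex n"
  shows "inner_n n \<pi> r \<le> V + sup_norm n \<pi> * (\<Sum>i<n. max 0 (r i - V))"
proof -
  have nonneg: "\<And>i. i < n \<Longrightarrow> 0 \<le> \<pi> i" and total: "(\<Sum>i<n. \<pi> i) = 1"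
    using assms by (auto simp: prob_simplex_def)
  have "inner_n n \<pi> r = (\<Sum>i<n. \<pi> i * V) + (\<Sum>i<n. \<pi> i * (r i - V))"
    unfolding inner_n_def by (simp add: sum.distrib[symmetric] algebra_simps)
  also have "(\<Sum>i<n. \<pi> i * V) = V"
    using total by (simp add: sum_distrib_right[symmetric])
  also have "(\<Sum>i<n. \<pi> i * (r i - V)) \<le> (\<Sum>i<n. sup_norm n \<pi> * max 0 (r i - V))"
  proof (intro sum_mono)
    fix i assume "i \<in> {..<n}"
    then have "0 \<le> \<pi> i" "\<pi> i \<le> sup_norm n \<pi>"
      using nonneg abs_le_sup_norm[of i n \<pi>] by auto
    then show "\<pi> i * (r i - V) \<le> sup_norm n \<pi> * max 0 (r i - V)"
      by (meson max.cobounded1 max.cobounded2 mult_left_mono mult_right_mono order_trans)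
  qed
  finally show ?thesis
    by (simp add: sum_distrib_left)
qed

lemma penalized_inner_n_le_level:
  fixes r :: "nat \<Rightarrow> real"
  assumes antitone: "\<And>i j. i \<le> j \<Longrightarrow> j < n \<Longrightarrow> r j \<le> r i"
    and prefix_le: "\<And>k. k \<le> n \<Longrightarrow> (\<Sum>i<k. r i - V) \<le> \<delta>"
    and \<pi>: "\<pi> \<in> prob_simplex n"
  shows "inner_n n \<pi> r - \<delta> * sup_norm n \<pi> \<le> V"
proof -
  obtain k where "k \<le> n" "(\<Sum>i<n. max 0 (r i - V)) = (\<Sum>i<k. r i - V)"
    using sum_pos_part_eq_prefix_sum[of n "\<lambda>i. r i - V"] antitone by auto
  with prefix_le have pos_part_le: "(\<Sum>i<n. max 0 (r i - V)) \<le> \<delta>"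
    by simp
  have "n > 0"
    using \<pi> by (cases n) (auto simp: prob_simplex_def)
  then have "0 \<le> sup_norm n \<pi>"
    using abs_le_sup_norm[of 0 n \<pi>] by linarith
  with pos_part_le have "sup_norm n \<pi> * (\<Sum>i<n. max 0 (r i - V)) \<le> \<delta> * sup_norm n \<pi>"
    by (metis mult.commute mult_left_mono)
  with inner_n_le_level_plus_sup_norm_pos_part[OF \<pi>, of r V] show ?thesis
    by linarith
qed

theorem mainTheorem11:
  fixes n :: nat and \<delta> :: real and r :: "nat \<Rightarrow> real"
  assumes "n \<ge> 1" and "\<delta> \<ge> 0"
    and "\<And>i j. i \<le> j \<Longrightarrow> j < n \<Longrightarrow> r j \<le> r i"
  shows "\<exists>m\<in>{1..n}.
           (\<forall>k\<in>{1..n}. avg r k - \<delta> / real k \<le> avg r m - \<delta> / real m) \<and>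
           uvec m \<in> prob_simplex n \<and>
           (\<forall>\<pi>\<in>prob_simplex n. inner_n n \<pi> r - \<delta> * sup_norm n \<pi>
              \<le> inner_n n (uvec m) r - \<delta> * sup_norm n (uvec m))"
proof -
  define f where "f k = avg r k - \<delta> / real k" for k
  obtain m where m: "m \<in> {1..n}" and "Max (f ` {1..n}) = f m"
    using obtains_MAX[of "{1..n}" f] assms(1) by auto
  then have argmax: "\<forall>k\<in>{1..n}. f k \<le> f m"
    by (metis Max_ge finite_atLeastAtMost finite_imageI imageI)
  have value_uvec: "inner_n n (uvec m) r - \<delta> * sup_norm n (uvec m) = f m"
    using m by (simp add: inner_n_uvec sup_norm_uvec f_def)
  have "(\<Sum>i<k. r i - f m) \<le> \<delta>" if "k \<le> n" for k
  proof (cases "k = 0")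
    case False
    with that argmax have "(\<Sum>i<k. r i) / real k - \<delta> / real k \<le> f m"
      by (auto simp: f_def avg_def)
    with False show ?thesis
      by (simp add: sum_subtractf field_simps)
  qed (use assms(2) in simp)
  then have "\<forall>\<pi>\<in>prob_simplex n. inner_n n \<pi> r - \<delta> * sup_norm n \<pi> \<le> f m"
    using penalized_inner_n_le_level[of n r] assms(3) by blast
  with m argmax value_uvec show ?thesis
    unfolding f_def by (auto intro!: bexI[of _ m] uvec_in_prob_simplex)
qed

end
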